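(* Let $n\ge 1$, let $I=\{1,\dots,n\}=I_\Sigma\cup I_{\max}$ be a partition into disjoint (possibly empty) index sets, and let $\gamma_{ij}\in\mathcal{K}_\infty\cup\{0\}$, $i,j\in I$, with $\gamma_{ii}\equiv 0$. Let $\Gamma:\mathbb{R}^n_+\to\mathbb{R}^n_+$, $D_\alpha$ and $\mu$ be as defined in the context. Assume that there exists $\alpha\in\mathcal{K}_\infty$ such that $\Gamma\circ D_\alpha(s)\not\geq s$ for all $s\in\mathbb{R}^n_+\setminus\{0\}$. Then there exists $\phi\in\mathcal{K}_\infty$ such that for all $w,v\in\mathbb{R}^n_+$ the inequality $w\le \mu(\Gamma(w),v)$ implies $\|w\|\le\phi(\|v\|)$.
   Context: $\mathbb{R}_+=[0,\infty)$, $\mathbb{R}^n_+=[0,\infty)^n$. For $x,y\in\mathbb{R}^n$: $x\ge y$ iff $x_i\ge y_i$ for all $i$; $x>y$ iff $x_i>y_i$ for all $i$; $x\not\ge y$ iff there is $i$ with $x_i<y_i$. $\|\cdot\|$ denotes a norm on $\mathbb{R}^n$. $\mathcal{K}$ is the class of continuous strictly increasing $\gamma:\mathbb{R}_+\to\mathbb{R}_+$ with $\gamma(0)=0$; $\mathcal{K}_\infty$ those in $\mathcal{K}$ that are unbounded; $\mathrm{id}$ is the identity. The operator $\Gamma(s)=(\Gamma_1(s),\dots,\Gamma_n(s))^T$ is defined by $\Gamma_i(s)=\gamma_{i1}(s_1)+\dots+\gamma_{in}(s_n)$ for $i\in I_\Sigma$ and $\Gamma_i(s)=\max\{\gamma_{i1}(s_1),\dots,\gamma_{in}(s_n)\}$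 for $i\in I_{\max}$. For $\alpha\in\mathcal{K}_\infty$, $D_\alpha(s)=(D_1(s_1),\dots,D_n(s_n))^T$ with $D_i=\mathrm{id}+\alpha$ for $i\in I_\Sigma$ and $D_i=\mathrm{id}$ for $i\in I_{\max}$. The map $\mu:\mathbb{R}^n_+\times\mathbb{R}^n_+\to\mathbb{R}^n_+$ is $\mu(w,v)=(\mu_1(w_1,v_1),\dots,\mu_n(w_n,v_n))^T$ with $\mu_i(a,b)=a+b$ for $i\in I_\Sigma$ and $\mu_i(a,b)=\max\{a,b\}$ for $i\in I_{\max}$. *)

theory Defs
  imports "HOL-Analysis.Analysis"
begin

definition class_K :: "(real \<Rightarrow> real) \<Rightarrow> bool" where
  "class_K g \<longleftrightarrow> continuous_on {0..} g \<and> strict_mono_on {0..} g \<and> g 0 = 0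
      \<and> (\<forall>t\<ge>0. g t \<ge> 0)"

definition class_K_inf :: "(real \<Rightarrow> real) \<Rightarrow> bool" where
  "class_K_inf g \<longleftrightarrow> class_K g \<and> (\<forall>M. \<exists>t\<ge>0. g t > M)"

definition is_norm :: "(real ^ 'n \<Rightarrow> real) \<Rightarrow> bool" where
  "is_norm N \<longleftrightarrow> (\<forall>x. N x \<ge> 0) \<and> (\<forall>x. N x = 0 \<longleftrightarrow> x = 0)
     \<and> (\<forall>c x. N (c *\<^sub>R x) = \<bar>c\<bar> * N x) \<and> (\<forall>x y. N (x + y) \<le> N x + N y)"

text \<open>The gain operator Gamma; indices in IS are of sum type, the rest of max type.\<close>
definition Gam :: "'n::finite set \<Rightarrow> ('n \<Rightarrow> 'n \<Rightarrow> real \<Rightarrow> real) \<Rightarrow> real ^ 'n \<Rightarrow> real ^ 'n" where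
  "Gam IS g s = (\<chi> i. if i \<in> IS then (\<Sum>j\<in>UNIV. g i j (s $ j))
                        else Max (range (\<lambda>j. g i j (s $ j))))"

definition Dalpha :: "'n::finite set \<Rightarrow> (real \<Rightarrow> real) \<Rightarrow> real ^ 'n \<Rightarrow> real ^ 'n" where
  "Dalpha IS \<alpha> s = (\<chi> i. if i \<in> IS then s $ i + \<alpha> (s $ i) else s $ i)"

definition mu :: "'n::finite set \<Rightarrow> real ^ 'n \<Rightarrow> real ^ 'n \<Rightarrow> real ^ 'n" where
  "mu IS w v = (\<chi> i. if i \<in> IS then w $ i + v $ i else max (w $ i) (v $ i))"

end

theory Submission
  imports Defs
begin

(*
  The coordinates of a solution w of  w <= mu(Gamma(w), v)  can be bounded one at a time.
  Suppose the coordinates in a set R are bounded by c, and let w' be w with these coordinates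
  set to 0.  Writing w' = D_alpha(s), the small-gain condition yields an index i with
  Gamma(w')_i < s_i, which forces w'_i > 0, i.e. i is not in R.  Replacing w' by w raises
  Gamma_i by at most G(c) = sum_ij gamma_ij(c), so with r bounding the coordinates of v the
  inequality at i gives  w_i <= alpha^-1(G(c) + r) + G(c) + r.  After n rounds every
  coordinate is bounded by a continuous nondecreasing function of r vanishing at 0, and since
  the coordinates of v are bounded by a multiple of N v and N w by a multiple of the largest
  coordinate of w, adding the identity gives the required phi.
*)

lemma is_norm_zero: "is_norm N \<Longrightarrow> N 0 = 0"
  by (simp add: is_norm_def)

lemma is_norm_minus_commute: "is_norm N \<Longrightarrow> N (x - y) = N (y - x)"
  unfolding is_norm_def by (metis abs_minus_cancel abs_one minus_diff_eq mult_1 scaleR_minus1_left)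

lemma is_norm_sum_le:
  assumes N: "is_norm N" and "finite A"
  shows "N (\<Sum>i\<in>A. f i) \<le> (\<Sum>i\<in>A. N (f i))"
  using assms(2)
proof (induction A rule: finite_induct)
  case empty
  then show ?case using is_norm_zero[OF N] by simp
next
  case (insert x F)
  have "N (f x + sum f F) \<le> N (f x) + N (sum f F)"
    using N by (simp add: is_norm_def)
  with insert show ?case by simp
qed

lemma is_norm_le_sum_axis:
  fixes N :: "real ^ 'n::finite \<Rightarrow> real"
  assumes N: "is_norm N"
  shows "N x \<le> (\<Sum>i\<in>UNIV. \<bar>x $ i\<bar> * N (axis i 1))"
proof -
  have "N x = N (\<Sum>i\<in>UNIV. (x $ i) *\<^sub>R axis i 1)"
    using basis_expansion[of x] by (simp add: scalar_mult_eq_scaleR)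
  also have "\<dots> \<le> (\<Sum>i\<in>UNIV. N ((x $ i) *\<^sub>R axis i 1))"
    by (rule is_norm_sum_le[OF N]) simp
  also have "\<dots> = (\<Sum>i\<in>UNIV. \<bar>x $ i\<bar> * N (axis i 1))"
    using N by (simp add: is_norm_def)
  finally show ?thesis .
qed

lemma is_norm_lipschitz:
  fixes N :: "real ^ 'n::finite \<Rightarrow> real"
  assumes N: "is_norm N"
  shows "(\<Sum>i\<in>UNIV. N (axis i 1))-lipschitz_on UNIV N"
proof (rule lipschitz_onI)
  let ?K = "\<Sum>i\<in>UNIV. N (axis i 1)"
  show "0 \<le> ?K"
    using N by (simp add: is_norm_def sum_nonneg)
  fix x y :: "real ^ 'n"
  have "N x \<le> N y + N (x - y)" and "N y \<le> N x + N (y - x)"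
    using N unfolding is_norm_def by (metis add.commute diff_add_cancel)+
  then have "dist (N x) (N y) \<le> N (x - y)"
    using is_norm_minus_commute[OF N, of x y] by (simp add: dist_real_def abs_le_iff)
  also have "\<dots> \<le> (\<Sum>i\<in>UNIV. \<bar>(x - y) $ i\<bar> * N (axis i 1))"
    by (rule is_norm_le_sum_axis[OF N])
  also have "\<dots> \<le> (\<Sum>i\<in>UNIV. dist x y * N (axis i 1))"
    by (intro sum_mono mult_right_mono)
       (use N component_le_norm_cart[of "x - y"] in \<open>auto simp: is_norm_def dist_norm\<close>)
  finally show "dist (N x) (N y) \<le> ?K * dist x y"
    by (simp add: sum_distrib_left mult.commute)
qed

lemma is_norm_component_le:
  fixes N :: "real ^ 'n::finite \<Rightarrow> real"
  assumes N: "is_norm N"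
  shows "\<exists>C>0. \<forall>x i. \<bar>x $ i\<bar> \<le> C * N x"
proof -
  have "sphere (0::real ^ 'n) 1 \<noteq> {}"
    using norm_axis_1[of undefined] by (auto intro!: exI[of _ "axis undefined 1"])
  moreover have "continuous_on (sphere 0 1) N"
    using lipschitz_on_continuous_on[OF is_norm_lipschitz[OF N]] continuous_on_subset by blast
  ultimately obtain x0 where x0: "x0 \<in> sphere 0 1" and min: "\<And>y. y \<in> sphere 0 1 \<Longrightarrow> N x0 \<le> N y"
    using continuous_attains_inf[OF compact_sphere] by blast
  have m0: "N x0 > 0"
    using N x0 unfolding is_norm_def by (metis dist_0_norm mem_sphere order_le_less zero_neq_one norm_zero)
  have "\<bar>x $ i\<bar> \<le> 1 / N x0 * N x" for x i
  proof (cases "x = 0")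
    case True
    then show ?thesis using is_norm_zero[OF N] by simp
  next
    case False
    then have nx: "norm x > 0" by simp
    have "N x0 \<le> N ((1 / norm x) *\<^sub>R x)"
      using nx by (intro min) (simp add: dist_norm)
    also have "\<dots> = N x / norm x"
      using N nx unfolding is_norm_def by simp
    finally have "norm x \<le> 1 / N x0 * N x"
      using nx m0 by (simp add: field_simps)
    then show ?thesis using component_le_norm_cart[of x i] by linarith
  qed
  with m0 show ?thesis by (intro exI[of _ "1 / N x0"]) auto
qed

definition class_K_weak :: "(real \<Rightarrow> real) \<Rightarrow> bool" where
  "class_K_weak f \<longleftrightarrow> continuous_on {0..} f \<and> mono_on {0..} f \<and> f 0 = 0"

lemma class_K_weakD:
  assumes "class_K_weak f"
  shows class_K_weak_continuous: "continuous_on {0..} f"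
    and class_K_weak_mono: "0 \<le> s \<Longrightarrow> s \<le> t \<Longrightarrow> f s \<le> f t"
    and class_K_weak_zero: "f 0 = 0"
    and class_K_weak_nonneg: "0 \<le> t \<Longrightarrow> 0 \<le> f t"
  using assms mono_onD[of "{0..}" f 0 t] mono_onD[of "{0..}" f s t]
  unfolding class_K_weak_def by auto

lemma class_K_imp_class_K_weak: "class_K f \<Longrightarrow> class_K_weak f"
  unfolding class_K_def class_K_weak_def by (auto intro: strict_mono_on_imp_mono_on)

lemma class_K_weak_vanishing: "(\<And>t. 0 \<le> t \<Longrightarrow> f t = 0) \<Longrightarrow> class_K_weak f"
  unfolding class_K_weak_def
  by (auto intro!: mono_onI continuous_on_eq[OF continuous_on_const, of _ 0])

lemma class_K_weak_ident: "class_K_weak (\<lambda>t. t)"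
  unfolding class_K_weak_def by (auto intro: continuous_intros mono_onI)

lemma class_K_weak_add:
  "class_K_weak f \<Longrightarrow> class_K_weak g \<Longrightarrow> class_K_weak (\<lambda>t. f t + g t)"
  unfolding class_K_weak_def
  by (auto intro!: continuous_intros mono_onI add_mono dest: mono_onD)

lemma class_K_weak_sum:
  "finite A \<Longrightarrow> (\<And>i. i \<in> A \<Longrightarrow> class_K_weak (f i)) \<Longrightarrow> class_K_weak (\<lambda>t. \<Sum>i\<in>A. f i t)"
proof (induction A rule: finite_induct)
  case empty
  then show ?case by (simp add: class_K_weak_vanishing)
next
  case (insert x F)
  then show ?case by (simp add: class_K_weak_add)
qed

lemma class_K_weak_scale:
  "class_K_weak f \<Longrightarrow> 0 \<le> c \<Longrightarrow> class_K_weak (\<lambda>t. c * f t)"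
  unfolding class_K_weak_def
  by (auto intro!: continuous_intros mono_onI mult_left_mono dest: mono_onD)

lemma class_K_weak_compose:
  assumes f: "class_K_weak f" and g: "class_K_weak g"
  shows "class_K_weak (\<lambda>t. f (g t))"
  unfolding class_K_weak_def
proof (intro conjI mono_onI)
  show "continuous_on {0..} (\<lambda>t. f (g t))"
    using class_K_weak_continuous[OF f] class_K_weak_continuous[OF g] class_K_weak_nonneg[OF g]
    by (auto intro: continuous_on_compose2)
  show "f (g s) \<le> f (g t)" if "s \<in> {0..}" "t \<in> {0..}" "s \<le> t" for s t
    using that g by (auto intro: class_K_weak_mono[OF f] class_K_weak_nonneg class_K_weak_mono)
  show "f (g 0) = 0"
    by (simp add: class_K_weak_zero f g)
qed

lemma class_K_inf_add_ident:
  assumes f: "class_K_weak f"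
  shows "class_K_inf (\<lambda>t. t + f t)"
  unfolding class_K_inf_def class_K_def
proof (intro conjI allI impI strict_mono_onI)
  show "continuous_on {0..} (\<lambda>t. t + f t)"
    using class_K_weak_continuous[OF f] by (intro continuous_intros)
  show "s + f s < t + f t" if "s \<in> {0..}" "t \<in> {0..}" "s < t" for s t
    using that class_K_weak_mono[OF f, of s t] by simp
  show "0 + f 0 = 0"
    by (simp add: class_K_weak_zero f)
  show "0 \<le> t + f t" if "0 \<le> t" for t
    using that class_K_weak_nonneg[OF f] by simp
  show "\<exists>t\<ge>0. M < t + f t" for M
    using class_K_weak_nonneg[OF f, of "max 0 M + 1"] by (intro exI[of _ "max 0 M + 1"]) auto
qed

lemma class_K_inf_surj:
  assumes a: "class_K_inf a" and y: "0 \<le> y"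
  shows "\<exists>x\<ge>0. a x = y"
proof -
  obtain T where "0 \<le> T" "y < a T"
    using a unfolding class_K_inf_def by blast
  moreover have "continuous_on {0..T} a" and "a 0 = 0"
    using a unfolding class_K_inf_def class_K_def by (auto intro: continuous_on_subset)
  ultimately show ?thesis
    using IVT'[of a 0 y T] y by auto
qed

lemma class_K_inf_left_inverse:
  assumes a: "class_K_inf a"
  shows "\<exists>b. class_K_weak b \<and> (\<forall>s\<ge>0. b (a s) = s)"
proof -
  have smo: "strict_mono_on {0..} a" and a0: "a 0 = 0" and ann: "\<And>t. 0 \<le> t \<Longrightarrow> 0 \<le> a t"
    using a unfolding class_K_inf_def class_K_def by auto
  (* Extended by the identity on the negative reals, a becomes a strictly increasing bijection
     of the real line; its inverse is continuous because it is monotone with open range. *)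
  define a' where "a' x = (if 0 \<le> x then a x else x)" for x
  have a'_less: "a' x < a' y" if "x < y" for x y
    using that strict_mono_onD[OF smo, of x y] ann[of y] unfolding a'_def by auto
  have "inj a'"
    by (rule injI) (metis a'_less less_irrefl linorder_cases)
  moreover have "surj a'"
  proof (rule surjI)
    fix y
    show "a' (if 0 \<le> y then SOME x. 0 \<le> x \<and> a x = y else y) = y"
      using someI_ex[OF class_K_inf_surj[OF a, of y]] unfolding a'_def by auto
  qed
  ultimately have inv_a': "a' (inv a' y) = y" "inv a' (a' x) = x" for x y
    by (simp_all add: surj_f_inv_f)
  define b where "b = inv a'"
  have b_mono: "b x \<le> b y" if "x \<le> y" for x y
    using that a'_less[of "b y" "b x"] inv_a' unfolding b_def by force
  have "continuous_on UNIV b"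
  proof (rule continuous_onI_mono)
    show "open (range b)"
      using inv_a'(2) unfolding b_def by (metis open_UNIV surjI)
  qed (use b_mono in auto)
  then have "class_K_weak b"
    using inv_a'(2)[of 0] a0 b_mono unfolding class_K_weak_def b_def a'_def
    by (auto intro: continuous_on_subset mono_onI)
  moreover have "b (a s) = s" if "0 \<le> s" for s
    using inv_a'(2)[of s] that unfolding b_def a'_def by simp
  ultimately show ?thesis by blast
qed

lemma Gam_nonneg:
  assumes g: "\<And>i j. class_K_weak (g i j)" and w: "\<And>j. 0 \<le> w $ j"
  shows "0 \<le> Gam IS g w $ i"
proof -
  have "0 \<le> g i i (w $ i)"
    using class_K_weak_nonneg[OF g w] .
  also have "\<dots> \<le> Max (range (\<lambda>j. g i j (w $ j)))"
    by (rule Max_ge) auto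
  finally show ?thesis
    using class_K_weak_nonneg[OF g w] unfolding Gam_def by (simp add: sum_nonneg)
qed

lemma Gam_le_mu_truncation:
  fixes w :: "real ^ 'n::finite"
  assumes g: "\<And>i j. class_K_weak (g i j)" and w: "\<And>j. 0 \<le> w $ j"
    and c: "0 \<le> c" "\<And>j. j \<in> R \<Longrightarrow> w $ j \<le> c"
    and M: "(\<Sum>j\<in>UNIV. g i j c) \<le> M"
  shows "Gam IS g w $ i \<le> mu IS (Gam IS g (\<chi> j. if j \<in> R then 0 else w $ j)) (vec M) $ i"
proof -
  let ?w' = "\<chi> j. if j \<in> R then 0 else w $ j"
  have gc: "g i j c \<le> M" for j
    using M member_le_sum[of j UNIV "\<lambda>j. g i j c"] class_K_weak_nonneg[OF g c(1)] by simp
  have split: "g i j (w $ j) \<le> g i j (?w' $ j) + g i j c"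
    and split_max: "g i j (w $ j) \<le> max (g i j (?w' $ j)) (g i j c)" for j
    using class_K_weak_mono[OF g w c(2)] class_K_weak_nonneg[OF g c(1)] class_K_weak_zero[OF g]
    by auto
  show ?thesis
  proof (cases "i \<in> IS")
    case True
    have "(\<Sum>j\<in>UNIV. g i j (w $ j)) \<le> (\<Sum>j\<in>UNIV. g i j (?w' $ j) + g i j c)"
      by (rule sum_mono) (rule split)
    with M show ?thesis
      using True unfolding Gam_def mu_def by (simp add: sum.distrib)
  next
    case False
    have "Max (range (\<lambda>j. g i j (w $ j))) \<le> max (Max (range (\<lambda>j. g i j (?w' $ j)))) M"
    proof (rule Max.boundedI)
      fix y assume "y \<in> range (\<lambda>j. g i j (w $ j))"
      then obtain j where "y = g i j (w $ j)" by blast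
      moreover have "g i j (?w' $ j) \<le> Max (range (\<lambda>j. g i j (?w' $ j)))"
        by (rule Max_ge) auto
      ultimately show "y \<le> max (Max (range (\<lambda>j. g i j (?w' $ j)))) M"
        using split_max[of j] gc[of j] by linarith
    qed auto
    then show ?thesis
      using False unfolding Gam_def mu_def by simp
  qed
qed

lemma small_gain_witness:
  fixes x :: "real ^ 'n::finite"
  assumes \<alpha>: "class_K_inf \<alpha>"
    and small_gain: "\<forall>s::real ^ 'n. (\<forall>i. 0 \<le> s $ i) \<and> s \<noteq> 0 \<longrightarrow>
          (\<exists>i. Gam IS g (Dalpha IS \<alpha> s) $ i < s $ i)"
    and x: "\<And>j. 0 \<le> x $ j" "x \<noteq> 0"
  shows "\<exists>i t. 0 \<le> t \<and> Gam IS g x $ i < t \<and> x $ i = (if i \<in> IS then t + \<alpha> t else t)"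
proof -
  have \<alpha>_weak: "class_K_weak \<alpha>"
    using \<alpha> by (simp add: class_K_inf_def class_K_imp_class_K_weak)
  obtain f where f: "\<And>j. 0 \<le> f j \<and> f j + \<alpha> (f j) = x $ j"
    using class_K_inf_surj[OF class_K_inf_add_ident[OF \<alpha>_weak] x(1)] by metis
  define s where "s = (\<chi> j. if j \<in> IS then f j else x $ j)"
  have D: "Dalpha IS \<alpha> s = x"
    unfolding Dalpha_def s_def by (simp add: vec_eq_iff f)
  have "s \<noteq> 0"
  proof
    assume "s = 0"
    then have "Dalpha IS \<alpha> s = 0"
      using class_K_weak_zero[OF \<alpha>_weak] by (simp add: Dalpha_def vec_eq_iff)
    with D x(2) show False by simp
  qed
  moreover have "0 \<le> s $ j" for j
    using f x(1) unfolding s_def by simp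
  ultimately obtain i where i: "Gam IS g x $ i < s $ i"
    using small_gain D by metis
  have "x $ i = (if i \<in> IS then s $ i + \<alpha> (s $ i) else s $ i)"
    using f[of i] unfolding s_def by simp
  with i \<open>0 \<le> s $ i\<close> show ?thesis
    by blast
qed

lemma truncation_step:
  fixes w v :: "real ^ 'n::finite"
  assumes g: "\<And>i j. class_K_weak (g i j)" and \<alpha>: "class_K_inf \<alpha>"
    and small_gain: "\<forall>s::real ^ 'n. (\<forall>i. 0 \<le> s $ i) \<and> s \<noteq> 0 \<longrightarrow>
          (\<exists>i. Gam IS g (Dalpha IS \<alpha> s) $ i < s $ i)"
    and b: "class_K_weak b" "\<And>s. 0 \<le> s \<Longrightarrow> b (\<alpha> s) = s"
    and w: "\<And>j. 0 \<le> w $ j" and r: "0 \<le> r" "\<And>j. v $ j \<le> r"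
    and hyp: "\<And>j. w $ j \<le> mu IS (Gam IS g w) v $ j"
    and c: "0 \<le> c" "\<And>j. j \<in> R \<Longrightarrow> w $ j \<le> c"
    and M: "\<And>i. (\<Sum>j\<in>UNIV. g i j c) \<le> M"
    and R: "R \<noteq> UNIV"
  shows "\<exists>i. i \<notin> R \<and> w $ i \<le> b (M + r) + M + r"
proof -
  define w' where "w' = (\<chi> j. if j \<in> R then 0 else w $ j)"
  have w': "\<And>j. 0 \<le> w' $ j"
    using w unfolding w'_def by simp
  have "0 \<le> (\<Sum>j\<in>UNIV. g undefined j c)"
    by (intro sum_nonneg class_K_weak_nonneg[OF g c(1)])
  then have "0 \<le> M"
    using M by (rule order_trans)
  then have bound_nonneg: "0 \<le> M + r" "0 \<le> b (M + r)"
    using r(1) class_K_weak_nonneg[OF b(1)] by simp_all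
  show ?thesis
  proof (cases "w' = 0")
    case True
    obtain i where "i \<notin> R"
      using R by blast
    then have "w $ i = w' $ i"
      unfolding w'_def by simp
    with True \<open>i \<notin> R\<close> bound_nonneg show ?thesis
      by (intro exI[of _ i]) simp
  next
    case False
    obtain i t where t: "0 \<le> t" "Gam IS g w' $ i < t"
      and w'_i: "w' $ i = (if i \<in> IS then t + \<alpha> t else t)"
      using small_gain_witness[OF \<alpha> small_gain w' False] by blast
    have \<alpha>t: "0 \<le> \<alpha> t"
      using \<alpha> t(1) unfolding class_K_inf_def class_K_def by simp
    have "0 \<le> Gam IS g w' $ i"
      by (rule Gam_nonneg[OF g w'])
    then have "0 < w' $ i"
      using t w'_i \<alpha>t by (simp split: if_splits)
    then have iR: "i \<notin> R" and wi: "w $ i = w' $ i"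
      unfolding w'_def by (simp_all split: if_splits)
    have Gam_i: "Gam IS g w $ i \<le> mu IS (Gam IS g w') (vec M) $ i"
      unfolding w'_def by (rule Gam_le_mu_truncation[OF g w c M])
    show ?thesis
    proof (cases "i \<in> IS")
      case True
      have "t + \<alpha> t \<le> Gam IS g w' $ i + M + r"
        using hyp[of i] Gam_i r(2)[of i] True wi w'_i unfolding mu_def by simp
      then have "\<alpha> t \<le> M + r"
        using t(2) by simp
      have "t = b (\<alpha> t)"
        by (simp add: b(2) t(1))
      also have "\<dots> \<le> b (M + r)"
        using \<alpha>t \<open>\<alpha> t \<le> M + r\<close> by (rule class_K_weak_mono[OF b(1)])
      finally have "t \<le> b (M + r)" .
      with iR True wi w'_i \<open>\<alpha> t \<le> M + r\<close> show ?thesis by auto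
    next
      case False
      have "w $ i \<le> max (max (Gam IS g w' $ i) M) r"
        using hyp[of i] Gam_i r(2)[of i] False unfolding mu_def by auto
      then have "w $ i \<le> M + r"
        using t(2) False wi w'_i r(1) \<open>0 \<le> M\<close> by auto
      with iR bound_nonneg show ?thesis by auto
    qed
  qed
qed

(* The summand bound_seq b G k r makes the sequence increasing in k, so bounds established
   in earlier rounds persist. *)
primrec bound_seq :: "(real \<Rightarrow> real) \<Rightarrow> (real \<Rightarrow> real) \<Rightarrow> nat \<Rightarrow> real \<Rightarrow> real" where
  "bound_seq b G 0 r = 0"
| "bound_seq b G (Suc k) r =
     bound_seq b G k r + b (G (bound_seq b G k r) + r) + G (bound_seq b G k r) + r"

lemma class_K_weak_bound_seq:
  assumes "class_K_weak b" and "class_K_weak G"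
  shows "class_K_weak (bound_seq b G k)"
proof (induction k)
  case 0
  then show ?case by (simp add: class_K_weak_vanishing)
next
  case (Suc k)
  have G_seq: "class_K_weak (\<lambda>r. G (bound_seq b G k r))"
    using class_K_weak_compose[OF assms(2) Suc] .
  then have "class_K_weak (\<lambda>r. b (G (bound_seq b G k r) + r))"
    using class_K_weak_compose[OF assms(1) class_K_weak_add[OF _ class_K_weak_ident]] by blast
  then show ?case
    using class_K_weak_add[OF class_K_weak_add[OF class_K_weak_add[OF Suc] G_seq] class_K_weak_ident]
    by simp
qed

lemma bound_seq_le_Suc:
  assumes "class_K_weak b" and "class_K_weak G" and "0 \<le> r"
  shows "bound_seq b G k r \<le> bound_seq b G (Suc k) r"
proof -
  have "0 \<le> G (bound_seq b G k r)"
    using assms by (intro class_K_weak_nonneg[OF assms(2)] class_K_weak_nonneg[OF class_K_weak_bound_seq])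
  moreover from this have "0 \<le> b (G (bound_seq b G k r) + r)"
    using assms by (intro class_K_weak_nonneg[OF assms(1)]) simp
  ultimately show ?thesis
    using assms(3) by simp
qed

lemma components_le_bound_seq:
  fixes w v :: "real ^ 'n::finite"
  assumes g: "\<And>i j. class_K_weak (g i j)" and \<alpha>: "class_K_inf \<alpha>"
    and small_gain: "\<forall>s::real ^ 'n. (\<forall>i. 0 \<le> s $ i) \<and> s \<noteq> 0 \<longrightarrow>
          (\<exists>i. Gam IS g (Dalpha IS \<alpha> s) $ i < s $ i)"
    and b: "class_K_weak b" "\<And>s. 0 \<le> s \<Longrightarrow> b (\<alpha> s) = s"
    and G: "class_K_weak G" "\<And>i c. 0 \<le> c \<Longrightarrow> (\<Sum>j\<in>UNIV. g i j c) \<le> G c"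
    and w: "\<And>j. 0 \<le> w $ j" and r: "0 \<le> r" "\<And>j. v $ j \<le> r"
    and hyp: "\<And>j. w $ j \<le> mu IS (Gam IS g w) v $ j"
  shows "w $ j \<le> bound_seq b G CARD('n) r"
proof -
  have "\<exists>R. min k CARD('n) \<le> card R \<and> (\<forall>j\<in>R. w $ j \<le> bound_seq b G k r)" for k
  proof (induction k)
    case 0
    then show ?case by auto
  next
    case (Suc k)
    then obtain R where card_R: "min k CARD('n) \<le> card R"
      and R: "\<forall>j\<in>R. w $ j \<le> bound_seq b G k r" by blast
    have le_Suc: "bound_seq b G k r \<le> bound_seq b G (Suc k) r"
      using bound_seq_le_Suc[OF b(1) G(1) r(1)] .
    show ?case
    proof (cases "R = UNIV")
      case True
      with R le_Suc show ?thesis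
        by (intro exI[of _ R]) (auto simp: min_le_iff_disj intro: order_trans)
    next
      case False
      have c: "0 \<le> bound_seq b G k r"
        using class_K_weak_nonneg[OF class_K_weak_bound_seq[OF b(1) G(1)] r(1)] .
      have "\<And>j. j \<in> R \<Longrightarrow> w $ j \<le> bound_seq b G k r"
        using R by blast
      from truncation_step[OF g \<alpha> small_gain b w r hyp c this G(2)[OF c] False]
      obtain i where "i \<notin> R"
        and "w $ i \<le> b (G (bound_seq b G k r) + r) + G (bound_seq b G k r) + r"
        by blast
      with c have "i \<notin> R" and "w $ i \<le> bound_seq b G (Suc k) r"
        by simp_all
      moreover have "min (Suc k) CARD('n) \<le> card (insert i R)"
        using card_R \<open>i \<notin> R\<close> by simp
      ultimately show ?thesis
        using R le_Suc by (intro exI[of _ "insert i R"]) auto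
    qed
  qed
  from this[of "CARD('n)"] obtain R
    where card_R: "CARD('n) \<le> card R" and R: "\<forall>j\<in>R. w $ j \<le> bound_seq b G CARD('n) r"
    by auto
  from card_R have "R = UNIV"
    by (rule card_seteq[OF finite subset_UNIV])
  with R show ?thesis by simp
qed

theorem lemma2:
  fixes IS :: "'n::finite set"
    and g :: "'n \<Rightarrow> 'n \<Rightarrow> real \<Rightarrow> real"
    and N :: "real ^ 'n \<Rightarrow> real"
  assumes N: "is_norm N"
    and g_class: "\<And>i j. class_K_inf (g i j) \<or> (\<forall>t\<ge>0. g i j t = 0)"
    and g_diag: "\<And>i t. t \<ge> 0 \<Longrightarrow> g i i t = 0"
    and small_gain: "\<exists>\<alpha>. class_K_inf \<alpha> \<and>
          (\<forall>s::real ^ 'n. (\<forall>i. 0 \<le> s $ i) \<and> s \<noteq> 0 \<longrightarrow>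
              (\<exists>i. Gam IS g (Dalpha IS \<alpha> s) $ i < s $ i))"
  shows "\<exists>\<phi>. class_K_inf \<phi> \<and>
          (\<forall>w v :: real ^ 'n. (\<forall>i. 0 \<le> w $ i) \<and> (\<forall>i. 0 \<le> v $ i) \<and>
              (\<forall>i. w $ i \<le> mu IS (Gam IS g w) v $ i) \<longrightarrow> N w \<le> \<phi> (N v))"
proof -
  obtain \<alpha> where \<alpha>: "class_K_inf \<alpha>" and small_gain_\<alpha>: "\<forall>s::real ^ 'n. (\<forall>i. 0 \<le> s $ i) \<and> s \<noteq> 0 \<longrightarrow>
      (\<exists>i. Gam IS g (Dalpha IS \<alpha> s) $ i < s $ i)"
    using small_gain by blast
  have g: "class_K_weak (g i j)" for i j
  proof (cases "class_K_inf (g i j)")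
    case True
    then show ?thesis by (simp add: class_K_inf_def class_K_imp_class_K_weak)
  next
    case False
    then show ?thesis using g_class[of i j] by (simp add: class_K_weak_vanishing)
  qed
  obtain b where b: "class_K_weak b" "\<And>s. 0 \<le> s \<Longrightarrow> b (\<alpha> s) = s"
    using class_K_inf_left_inverse[OF \<alpha>] by blast
  define G where "G c = (\<Sum>i\<in>UNIV. \<Sum>j\<in>UNIV. g i j c)" for c
  have G: "class_K_weak G"
    unfolding G_def by (intro class_K_weak_sum g finite)
  have G_ge: "(\<Sum>j\<in>UNIV. g i j c) \<le> G c" if "0 \<le> c" for i c
  proof -
    have "0 \<le> g i' j c" for i' j
      using class_K_weak_nonneg[OF g that] .
    then show ?thesis
      unfolding G_def by (intro member_le_sum sum_nonneg) auto
  qed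
  define \<psi> where "\<psi> = bound_seq b G CARD('n)"
  obtain C where C: "0 < C" "\<And>x i. \<bar>x $ i\<bar> \<le> C * N x"
    using is_norm_component_le[OF N] by blast
  define K where "K = (\<Sum>i\<in>UNIV. N (axis i (1::real)))"
  have "0 \<le> K"
    using N unfolding K_def is_norm_def by (simp add: sum_nonneg)
  define \<phi> where "\<phi> t = t + K * \<psi> (C * t)" for t
  have "class_K_weak (\<lambda>t. \<psi> (C * t))"
    unfolding \<psi>_def using class_K_weak_bound_seq[OF b(1) G]
    by (rule class_K_weak_compose[OF _ class_K_weak_scale[OF class_K_weak_ident]]) (use C(1) in simp)
  then have "class_K_weak (\<lambda>t. K * \<psi> (C * t))"
    using \<open>0 \<le> K\<close> by (rule class_K_weak_scale)
  then have "class_K_inf \<phi>"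
    unfolding \<phi>_def by (rule class_K_inf_add_ident)
  moreover have "N w \<le> \<phi> (N v)"
    if w: "\<And>i. 0 \<le> w $ i" and hyp: "\<And>i. w $ i \<le> mu IS (Gam IS g w) v $ i" for w v :: "real ^ 'n"
  proof -
    have r: "0 \<le> C * N v"
      using C(1) N by (simp add: is_norm_def)
    have v: "v $ i \<le> C * N v" for i
      using C(2)[of v i] by simp
    have "w $ i \<le> \<psi> (C * N v)" for i
      unfolding \<psi>_def using components_le_bound_seq[OF g \<alpha> small_gain_\<alpha> b G G_ge w r v hyp] .
    then have "(\<Sum>i\<in>UNIV. \<bar>w $ i\<bar> * N (axis i 1)) \<le> (\<Sum>i\<in>UNIV. \<psi> (C * N v) * N (axis i 1))"
      using w N by (intro sum_mono mult_right_mono) (simp_all add: is_norm_def)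
    with is_norm_le_sum_axis[OF N, of w]
    have "N w \<le> (\<Sum>i\<in>UNIV. \<psi> (C * N v) * N (axis i 1))"
      by (rule order_trans)
    also have "\<dots> \<le> \<phi> (N v)"
      using N unfolding \<phi>_def K_def is_norm_def by (simp add: sum_distrib_left mult.commute)
    finally show ?thesis .
  qed
  ultimately show ?thesis
    by blast
qed

end
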